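(* For every integer $m\ge 0$, the dimension of the subspace $F(L)^{(3,m)}$ of $F(L)$ spanned by classes with exactly $3$ letters $x$ and $m$ letters $y$ equals $\lfloor\frac{m-1}{2}\rfloor-\lfloor\frac{m-1}{3}\rfloor$.
   Context: $A=\mathbb{R}\langle x,y\rangle$; $L\subset A$ is the free Lie algebra on $x,y$ (smallest Lie subalgebra of $(A,[a,b]=ab-ba)$ containing $x,y$). $F(L)$ is the quotient of $L\otimes L$ by the span of $a\otimes b-b\otimes a$ and $a\otimes[b,c]-[a,b]\otimes c$ ($a,b,c\in L$); it is bigraded by the numbers of letters $x$ and $y$. *)

theory Defs
  imports Complex_Main "HOL-Library.Function_Algebras"
begin

text \<open>Free associative algebra A = R<x,y>: an element is a (finitely supported)
  coefficient function on words; a word is a bool list, False = letter x, True = letter y.\<close>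

type_synonym word = "bool list"
type_synonym ncpoly = "word \<Rightarrow> real"

definition fin_supp :: "ncpoly \<Rightarrow> bool" where
  "fin_supp p \<longleftrightarrow> finite {w. p w \<noteq> 0}"

definition A_set :: "ncpoly set" where
  "A_set = {p. fin_supp p}"

definition letX :: ncpoly where "letX = (\<lambda>w. if w = [False] then 1 else 0)"
definition letY :: ncpoly where "letY = (\<lambda>w. if w = [True] then 1 else 0)"

definition amul :: "ncpoly \<Rightarrow> ncpoly \<Rightarrow> ncpoly" where
  "amul p q = (\<lambda>w. \<Sum>i\<le>length w. p (take i w) * q (drop i w))"

definition ascale :: "real \<Rightarrow> ncpoly \<Rightarrow> ncpoly" where
  "ascale c p = (\<lambda>w. c * p w)"

definition lbr :: "ncpoly \<Rightarrow> ncpoly \<Rightarrow> ncpoly" where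
  "lbr a b = amul a b - amul b a"

inductive_set freeLie :: "ncpoly set" where
  gen_x: "letX \<in> freeLie"
| gen_y: "letY \<in> freeLie"
| zero: "0 \<in> freeLie"
| add: "a \<in> freeLie \<Longrightarrow> b \<in> freeLie \<Longrightarrow> a + b \<in> freeLie"
| scale: "a \<in> freeLie \<Longrightarrow> ascale c a \<in> freeLie"
| bracket: "a \<in> freeLie \<Longrightarrow> b \<in> freeLie \<Longrightarrow> lbr a b \<in> freeLie"

text \<open>A \<otimes> A is realised as (finitely supported) functions on pairs of words, with
  a \<otimes> b = (u,v) \<mapsto> a u * b v. Since R is a field, L \<otimes> L embeds in A \<otimes> A as the
  span of the pure tensors a \<otimes> b with a, b in L.\<close>

type_synonym tens2 = "word \<times> word \<Rightarrow> real"

definition tscale :: "real \<Rightarrow> tens2 \<Rightarrow> tens2" where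
  "tscale c t = (\<lambda>uv. c * t uv)"

definition tens :: "ncpoly \<Rightarrow> ncpoly \<Rightarrow> tens2" where
  "tens a b = (\<lambda>(u, v). a u * b v)"

abbreviation tspan :: "tens2 set \<Rightarrow> tens2 set" where
  "tspan S \<equiv> module.span tscale S"

abbreviation tdim :: "tens2 set \<Rightarrow> nat" where
  "tdim S \<equiv> vector_space.dim tscale S"

definition LtensL :: "tens2 set" where
  "LtensL = tspan {tens a b | a b. a \<in> freeLie \<and> b \<in> freeLie}"

text \<open>Relations defining F(L) = (L \<otimes> L) / RelF.\<close>
definition RelF :: "tens2 set" where
  "RelF = tspan ({tens a b - tens b a | a b. a \<in> freeLie \<and> b \<in> freeLie}
             \<union> {tens a (lbr b c) - tens (lbr a b) c | a b c.
                   a \<in> freeLie \<and> b \<in> freeLie \<and> c \<in> freeLie})"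

definition nx :: "word \<Rightarrow> nat" where "nx w = length (filter (\<lambda>b. \<not> b) w)"
definition ny :: "word \<Rightarrow> nat" where "ny w = length (filter (\<lambda>b. b) w)"

definition LtensL_bideg :: "nat \<Rightarrow> nat \<Rightarrow> tens2 set" where
  "LtensL_bideg p q = {t \<in> LtensL. \<forall>u v. t (u, v) \<noteq> 0 \<longrightarrow>
        nx u + nx v = p \<and> ny u + ny v = q}"

text \<open>dim F(L)^{(p,q)}: the subspace of F(L) spanned by the classes of bidegree (p,q)
  is the image of LtensL_bideg p q in the quotient, i.e. isomorphic to
  LtensL_bideg p q / (LtensL_bideg p q \<inter> RelF); its dimension is
  dim (LtensL_bideg p q) - dim (LtensL_bideg p q \<inter> RelF).\<close>
definition dimF :: "nat \<Rightarrow> nat \<Rightarrow> nat" where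
  "dimF p q = tdim (LtensL_bideg p q) - tdim (LtensL_bideg p q \<inter> RelF)"

end

theory Submission
  imports Defs "HOL-Analysis.Determinants" "HOL-Computational_Algebra.Polynomial"
begin

(* Write x_i = (ad y)^i x. The free Lie algebra is spanned by y and the right-normed brackets
   [x_i1, [x_i2, ..., x_k]], so modulo the relations every class of bidegree (3, m) in F(L) is a
   combination of the classes tau i j k of x_i (x) [x_j, x_k] with i + j + k = m. These are
   antisymmetric in j, k, cyclically invariant, and satisfy the Leibniz rule obtained by moving
   ad y across the tensor; an induction on m, lowering all three indices at once, shows that they
   are spanned by the tau i (i+1) (m-2i-1) with 3i+3 <= m and m - i odd.
   Conversely, in the 3-dimensional representation x |-> cyclic shift, y |-> diag(s+1, 1, 0) the
   trace form a (x) b |-> tr (rho a rho b) is symmetric and invariant, hence vanishes on the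
   relations, and on these elements it takes polynomial values in s with lowest terms of distinct
   degree i. So they are linearly independent in F(L), and counting the admissible i gives
   floor((m-1)/2) - floor((m-1)/3). *)

section \<open>Linear algebra\<close>

lemma sum_apply: "(sum f A) x = (\<Sum>a\<in>A. f a x)"
  by (induction A rule: infinite_finite_induct) auto

lemma bilinear_in_span:
  assumes "vector_space s1" "vector_space s2" "vector_space s3"
    and add_left: "\<And>a a' b. f (a + a') b = f a b + f a' b"
    and scale_left: "\<And>c a b. f (s1 c a) b = s3 c (f a b)"
    and add_right: "\<And>a b b'. f a (b + b') = f a b + f a b'"
    and scale_right: "\<And>c a b. f a (s2 c b) = s3 c (f a b)"
    and gens: "\<And>u v. u \<in> A \<Longrightarrow> v \<in> B \<Longrightarrow> f u v \<in> module.span s3 C"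
    and a: "a \<in> module.span s1 A" and b: "b \<in> module.span s2 B"
  shows "f a b \<in> module.span s3 C"
proof -
  interpret M1: vector_space s1 by fact
  interpret M2: vector_space s2 by fact
  interpret M3: vector_space s3 by fact
  have zero_left: "f 0 y = 0" for y using add_left[of 0 0 y] by simp
  have zero_right: "f x 0 = 0" for x using add_right[of x 0 0] by simp
  have right: "f u b \<in> M3.span C" if "u \<in> A" for u
    using b
  proof (induction b rule: M2.span_induct_alt)
    case base then show ?case by (simp add: zero_right M3.span_zero)
  next
    case (step c x y)
    then show ?case using gens[OF that]
      by (simp add: add_right scale_right M3.span_add M3.span_scale)
  qed
  show ?thesis using a
  proof (induction a rule: M1.span_induct_alt)
    case base then show ?case by (simp add: zero_left M3.span_zero)
  next
    case (step c x y)
    then show ?case using right[OF step.hyps(1)]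
      by (simp add: add_left scale_left M3.span_add M3.span_scale)
  qed
qed

lemma trace_sum: "trace (\<Sum>a\<in>A. f a) = (\<Sum>a\<in>A. trace (f a :: 'a::comm_semiring_1^'n^'n))"
  by (induction A rule: infinite_finite_induct) (simp_all add: trace_add trace_def[of 0])

lemma trace_scaleR: "trace (c *\<^sub>R (A :: real^'n^'n)) = c * trace A"
  by (simp add: trace_def sum_distrib_left)

lemma matrix_mul_sum_left: "(\<Sum>a\<in>S. f a) ** (B :: 'a::comm_semiring_1^'n^'k) = (\<Sum>a\<in>S. f a ** B)"
  by (simp add: matrix_matrix_mult_def vec_eq_iff sum_distrib_right sum.swap[of _ UNIV S])

lemma matrix_mul_sum_right: "(B :: 'a::comm_semiring_1^'k^'m) ** (\<Sum>a\<in>S. f a) = (\<Sum>a\<in>S. B ** f a)"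
  by (simp add: matrix_matrix_mult_def vec_eq_iff sum_distrib_left sum.swap[of _ UNIV S])

lemma matrix_mul_scaleR: "(a *\<^sub>R (A :: real^'k^'m)) ** (b *\<^sub>R (B :: real^'n^'k)) = (a * b) *\<^sub>R (A ** B)"
  by (simp add: matrix_matrix_mult_def vec_eq_iff sum_distrib_left mult_ac)

lemma sum_smult_triangular_eq_0:
  fixes p :: "nat \<Rightarrow> 'a::idom poly"
  assumes "finite J" and sum: "(\<Sum>i\<in>J. smult (c i) (p i)) = 0"
    and below: "\<And>i n. i \<in> J \<Longrightarrow> n < i \<Longrightarrow> coeff (p i) n = 0"
    and diagonal: "\<And>i. i \<in> J \<Longrightarrow> coeff (p i) i \<noteq> 0"
  shows "\<forall>i\<in>J. c i = 0"
proof (rule ccontr)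
  assume "\<not> (\<forall>i\<in>J. c i = 0)"
  then have N: "finite {i \<in> J. c i \<noteq> 0}" "{i \<in> J. c i \<noteq> 0} \<noteq> {}"
    using \<open>finite J\<close> by auto
  define i0 where "i0 = Min {i \<in> J. c i \<noteq> 0}"
  have i0: "i0 \<in> J" "c i0 \<noteq> 0" using Min_in[OF N] unfolding i0_def by auto
  have "(\<Sum>i\<in>J - {i0}. c i * coeff (p i) i0) = 0"
  proof (rule sum.neutral, rule ballI)
    fix i assume i: "i \<in> J - {i0}"
    show "c i * coeff (p i) i0 = 0"
    proof (cases "c i = 0")
      case False
      then have "i0 < i" using i Min_le[OF N(1), of i] unfolding i0_def by fastforce
      then show ?thesis using i below by simp
    qed simp
  qed
  then have "coeff (\<Sum>i\<in>J. smult (c i) (p i)) i0 = c i0 * coeff (p i0) i0"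
    by (simp add: coeff_sum sum.remove[OF \<open>finite J\<close> i0(1)])
  then show False using sum i0 diagonal by simp
qed

context vector_space
begin

lemma sum_scale_indicator:
  assumes "finite I" "i \<in> I"
  shows "(\<Sum>k\<in>I. scale (if k = i then a else 0) (e k)) = scale a (e i)"
proof -
  have "(\<Sum>k\<in>I. scale (if k = i then a else 0) (e k)) = (\<Sum>k\<in>I. if k = i then scale a (e k) else 0)"
    by (rule sum.cong) simp_all
  also have "\<dots> = scale a (e i)" using assms by simp
  finally show ?thesis .
qed

lemma independent_mod_imp_inj_on:
  assumes "subspace R" "finite I"
    and indep: "\<And>c. (\<Sum>i\<in>I. scale (c i) (e i)) \<in> R \<Longrightarrow> \<forall>i\<in>I. c i = 0"
  shows "inj_on e I"
proof
  fix i i' assume ii': "i \<in> I" "i' \<in> I" "e i = e i'"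
  let ?c = "\<lambda>k. (if k = i then 1 else 0) - (if k = i' then 1 else 0 :: 'a)"
  have "(\<Sum>k\<in>I. scale (?c k) (e k)) = e i - e i'"
    using sum_scale_indicator[OF assms(2)] ii'(1,2) by (simp add: scale_left_diff_distrib sum_subtractf)
  then have in_R: "(\<Sum>k\<in>I. scale (?c k) (e k)) \<in> R" using ii'(3) assms(1) by (simp add: subspace_0)
  have "\<forall>k\<in>I. ?c k = 0" by (rule indep[OF in_R])
  then have "?c i = 0" using ii'(1) by blast
  then show "i = i'" by (simp split: if_splits)
qed

lemma independent_mod_imp_notin:
  assumes "finite I" "i \<in> I"
    and indep: "\<And>c. (\<Sum>i\<in>I. scale (c i) (e i)) \<in> R \<Longrightarrow> \<forall>i\<in>I. c i = 0"
  shows "e i \<notin> R"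
proof
  assume "e i \<in> R"
  then have "(\<Sum>k\<in>I. scale (if k = i then 1 else 0) (e k)) \<in> R"
    using sum_scale_indicator[OF assms(1,2)] by simp
  then show False using indep assms(2) by fastforce
qed

lemma independent_Un_independent_mod:
  assumes K: "independent K" "finite K" "K \<subseteq> R" and R: "subspace R" and I: "finite I"
    and indep: "\<And>c. (\<Sum>i\<in>I. scale (c i) (e i)) \<in> R \<Longrightarrow> \<forall>i\<in>I. c i = 0"
  shows "independent (K \<union> e ` I)"
proof (rule independent_if_scalars_zero)
  show "finite (K \<union> e ` I)" using K(2) I by simp
  have inj: "inj_on e I" using R I indep by (rule independent_mod_imp_inj_on)
  have disjoint: "K \<inter> e ` I = {}"
    using K(3) independent_mod_imp_notin[OF I _ indep] by blast
  fix f x assume sum0: "(\<Sum>x\<in>K \<union> e ` I. scale (f x) x) = 0" and x: "x \<in> K \<union> e ` I"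
  have split: "(\<Sum>x\<in>K \<union> e ` I. scale (f x) x) =
      (\<Sum>x\<in>K. scale (f x) x) + (\<Sum>i\<in>I. scale (f (e i)) (e i))"
    using K(2) I disjoint by (simp add: sum.union_disjoint sum.reindex[OF inj])
  have "(\<Sum>x\<in>K. scale (f x) x) \<in> R"
    using K(3) R by (intro subspace_sum subspace_scale) auto
  moreover have "(\<Sum>i\<in>I. scale (f (e i)) (e i)) = - (\<Sum>x\<in>K. scale (f x) x)"
    using sum0 unfolding split by (simp add: eq_neg_iff_add_eq_0 add.commute)
  ultimately have "(\<Sum>i\<in>I. scale (f (e i)) (e i)) \<in> R"
    using R by (simp add: subspace_neg)
  then have fE: "\<forall>i\<in>I. f (e i) = 0" by (rule indep)
  then have "(\<Sum>x\<in>K. scale (f x) x) = 0" using sum0 unfolding split by simp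
  then have "\<forall>x\<in>K. f x = 0"
    using K(1,2) unfolding independent_explicit_finite_subsets by blast
  then show "f x = 0" using x fE by blast
qed

lemma dim_eq_dim_inter_add_card:
  assumes fin: "S \<subseteq> span F" "finite F"
    and R: "subspace R"
    and I: "finite I" "e ` I \<subseteq> S"
    and spans: "S \<subseteq> span (e ` I \<union> (S \<inter> R))"
    and indep: "\<And>c. (\<Sum>i\<in>I. scale (c i) (e i)) \<in> R \<Longrightarrow> \<forall>i\<in>I. c i = 0"
  shows "dim S = dim (S \<inter> R) + card I"
proof -
  obtain K where K: "K \<subseteq> S \<inter> R" "independent K" "S \<inter> R \<subseteq> span K" "card K = dim (S \<inter> R)"
    by (rule basis_exists)
  have "finite K"
    using independent_span_bound[OF fin(2) K(2)] K(1) fin(1) by blast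
  have "independent (K \<union> e ` I)"
    using K(1,2) \<open>finite K\<close> R I(1) indep by (intro independent_Un_independent_mod) auto
  moreover have "K \<union> e ` I \<subseteq> S" using K(1) I(2) by blast
  moreover have "S \<subseteq> span (K \<union> e ` I)"
  proof -
    have "S \<inter> R \<subseteq> span (K \<union> e ` I)" using K(3) span_mono[of K "K \<union> e ` I"] by blast
    then have "span (e ` I \<union> (S \<inter> R)) \<subseteq> span (K \<union> e ` I)"
      by (intro span_minimal subspace_span) (auto intro: span_base)
    then show ?thesis using spans by blast
  qed
  ultimately have "dim S = card (K \<union> e ` I)" by (intro dim_unique) simp_all
  also have "\<dots> = card K + card (e ` I)"
    using \<open>finite K\<close> I(1) K(1) independent_mod_imp_notin[OF I(1) _ indep]
    by (intro card_Un_disjoint) auto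
  also have "\<dots> = dim (S \<inter> R) + card I"
    using K(4) card_image[OF independent_mod_imp_inj_on[OF R I(1) indep]] by simp
  finally show ?thesis .
qed

end

section \<open>A system of relations on triples\<close>

lemma iff_chain_nat:
  assumes step: "\<And>j. a \<le> j \<Longrightarrow> j < b \<Longrightarrow> P j \<longleftrightarrow> P (Suc j)" and "a \<le> j" "j \<le> b"
  shows "P j \<longleftrightarrow> P a"
  using assms(2,3)
proof (induction j rule: dec_induct)
  case (step j)
  then show ?case using assms(1)[of j] by simp
qed simp

(* tau i j k stands for the class of x_i (x) [x_j, x_k] modulo span G. *)
locale triple_relations = vector_space scale
  for scale :: "real \<Rightarrow> 'b::ab_group_add \<Rightarrow> 'b" +
  fixes G :: "'b set" and m :: nat and \<tau> :: "nat \<Rightarrow> nat \<Rightarrow> nat \<Rightarrow> 'b"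
  assumes antisym: "i + j + k = m \<Longrightarrow> \<tau> i j k + \<tau> i k j \<in> span G"
    and cyclic: "i + j + k = m \<Longrightarrow> \<tau> i j k - \<tau> k i j \<in> span G"
    and leibniz: "Suc (i + j + k) = m \<Longrightarrow> \<tau> (Suc i) j k + \<tau> i (Suc j) k + \<tau> i j (Suc k) \<in> span G"
    and generators: "3 * i + 3 \<le> m \<Longrightarrow> odd (m - i) \<Longrightarrow> \<tau> i (Suc i) (m - 2 * i - 1) \<in> span G"
begin

lemma in_span_if_double: "x + x \<in> span G \<Longrightarrow> x \<in> span G"
  using span_scale[of "x + x" G "1/2"]
  by (metis scale_left_distrib scale_one scale_right_distrib field_sum_of_halves)

lemma antisym_first: assumes "a + b + c = m" shows "\<tau> a b c + \<tau> b a c \<in> span G"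
proof -
  have "\<tau> b a c - \<tau> a c b = (\<tau> b a c - \<tau> c b a) + (\<tau> c b a - \<tau> a c b)"
    by simp
  also have "\<dots> \<in> span G"
    using assms by (intro span_add cyclic) (simp_all add: ac_simps)
  finally have "\<tau> b a c - \<tau> a c b \<in> span G" .
  with antisym[OF assms] have "(\<tau> a b c + \<tau> a c b) + (\<tau> b a c - \<tau> a c b) \<in> span G"
    by (rule span_add)
  moreover have "(\<tau> a b c + \<tau> a c b) + (\<tau> b a c - \<tau> a c b) = \<tau> a b c + \<tau> b a c"
    by simp
  ultimately show ?thesis by simp
qed

lemma repeated_12: "a + a + c = m \<Longrightarrow> \<tau> a a c \<in> span G"
  using antisym_first in_span_if_double by blast

lemma repeated_23: "a + c + c = m \<Longrightarrow> \<tau> a c c \<in> span G"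
  using antisym in_span_if_double by blast

lemma repeated_13: assumes "a + c + a = m" shows "\<tau> a c a \<in> span G"
proof -
  have "\<tau> a a c \<in> span G" using assms by (intro repeated_12) simp
  then show ?thesis using antisym[OF assms] span_add_eq2 by blast
qed

lemma shift:
  assumes "3 \<le> m"
  shows "triple_relations scale G (m - 3) (\<lambda>i j k. \<tau> (Suc i) (Suc j) (Suc k))"
proof unfold_locales
  fix i j k
  show "i + j + k = m - 3 \<Longrightarrow> \<tau> (Suc i) (Suc j) (Suc k) + \<tau> (Suc i) (Suc k) (Suc j) \<in> span G"
    using assms by (intro antisym) simp
  show "i + j + k = m - 3 \<Longrightarrow> \<tau> (Suc i) (Suc j) (Suc k) - \<tau> (Suc k) (Suc i) (Suc j) \<in> span G"
    using assms by (intro cyclic) simp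
  show "Suc (i + j + k) = m - 3 \<Longrightarrow>
      \<tau> (Suc (Suc i)) (Suc j) (Suc k) + \<tau> (Suc i) (Suc (Suc j)) (Suc k) + \<tau> (Suc i) (Suc j) (Suc (Suc k))
      \<in> span G"
    using assms by (intro leibniz) simp
next
  fix i assume i: "3 * i + 3 \<le> m - 3" "odd (m - 3 - i)"
  have "m - 2 * Suc i - 1 = Suc (m - 3 - 2 * i - 1)" "m - Suc i = (m - 3 - i) + 2"
    using i by simp_all
  then show "\<tau> (Suc i) (Suc (Suc i)) (Suc (m - 3 - 2 * i - 1)) \<in> span G"
    using generators[of "Suc i"] i by simp
qed

context
  assumes interior: "\<And>i j k. i + j + k = m \<Longrightarrow> 0 < i \<Longrightarrow> 0 < j \<Longrightarrow> 0 < k \<Longrightarrow> \<tau> i j k \<in> span G"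
begin

lemma first_zero: assumes "j \<le> m" shows "\<tau> 0 j (m - j) \<in> span G"
proof -
  let ?P = "\<lambda>j. \<tau> 0 j (m - j) \<in> span G"
  have step: "?P j \<longleftrightarrow> ?P (Suc j)" if "1 \<le> j" "j < m - 1" for j
  proof -
    have "\<tau> 1 j (m - Suc j) + \<tau> 0 (Suc j) (m - Suc j) + \<tau> 0 j (Suc (m - Suc j)) \<in> span G"
      using leibniz[of 0 j "m - Suc j"] that by simp
    moreover have "\<tau> 1 j (m - Suc j) \<in> span G" using that by (intro interior) auto
    moreover have "Suc (m - Suc j) = m - j" using that by simp
    ultimately have "\<tau> 0 (Suc j) (m - Suc j) + \<tau> 0 j (m - j) \<in> span G"
      using span_add_eq by (simp add: add.assoc)
    then show ?thesis using span_add_eq span_add_eq2 by blast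
  qed
  \<comment> \<open>For odd m the chain is started by a generator, for even m by a vanishing repeated index.\<close>
  have base: "\<exists>j0. 1 \<le> j0 \<and> j0 \<le> m - 1 \<and> ?P j0" if "2 \<le> m"
  proof (cases "odd m")
    case True
    then have "3 \<le> m" using that by presburger
    then show ?thesis using True generators[of 0] by (intro exI[of _ 1]) simp
  next
    case False
    then have "m - m div 2 = m div 2" "0 + m div 2 + m div 2 = m" by presburger+
    then show ?thesis using that repeated_23[of 0 "m div 2"] by (intro exI[of _ "m div 2"]) auto
  qed
  consider "j = 0" | "j = m" | "1 \<le> j" "j \<le> m - 1" using assms by linarith
  then show ?thesis
  proof cases
    case 1 then show ?thesis using repeated_12[of 0 m] by simp
  next
    case 2 then show ?thesis using repeated_13[of 0 m] by simp
  next
    case 3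
    then obtain j0 where "1 \<le> j0" "j0 \<le> m - 1" "?P j0" using base by fastforce
    then show ?thesis
      using iff_chain_nat[of 1 "m - 1" ?P, OF step] 3 by blast
  qed
qed

lemma in_span_if_interior: assumes "i + j + k = m" shows "\<tau> i j k \<in> span G"
proof -
  consider "i = 0" | "j = 0" | "k = 0" | "0 < i" "0 < j" "0 < k" by blast
  then show ?thesis
  proof cases
    case 1
    then have "k = m - j" using assms by simp
    then show ?thesis using first_zero[of j] assms 1 by simp
  next
    case 2
    have "\<tau> i j k = (\<tau> i 0 k - \<tau> k i 0) + ((\<tau> k i 0 - \<tau> 0 k i) + \<tau> 0 k i)"
      using 2 by simp
    also have "\<dots> \<in> span G"
    proof (intro span_add cyclic)
      have "i = m - k" "k \<le> m" using assms 2 by simp_all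
      then show "\<tau> 0 k i \<in> span G" using first_zero[of k] by simp
    qed (use assms 2 in simp_all)
    finally show ?thesis .
  next
    case 3
    have "\<tau> i j k = (\<tau> i j 0 - \<tau> 0 i j) + \<tau> 0 i j"
      using 3 by simp
    also have "\<dots> \<in> span G"
    proof (intro span_add cyclic)
      have "j = m - i" "i \<le> m" using assms 3 by simp_all
      then show "\<tau> 0 i j \<in> span G" using first_zero[of i] by simp
    qed (use assms 3 in simp)
    finally show ?thesis .
  next
    case 4 then show ?thesis using interior assms by blast
  qed
qed

end

end

theorem triple_relations_in_span:
  fixes scale :: "real \<Rightarrow> 'b::ab_group_add \<Rightarrow> 'b"
  assumes "triple_relations scale G m \<tau>" and "i + j + k = m"
  shows "\<tau> i j k \<in> module.span scale G"
  using assms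
proof (induction m arbitrary: \<tau> i j k rule: less_induct)
  case (less m)
  interpret triple_relations scale G m \<tau> by (fact less.prems(1))
  show ?case
  proof (rule in_span_if_interior[OF _ less.prems(2)])
    fix a b c assume abc: "a + b + c = m" "0 < a" "0 < b" "0 < c"
    then have shifted: "triple_relations scale G (m - 3) (\<lambda>i j k. \<tau> (Suc i) (Suc j) (Suc k))"
      by (intro shift) simp
    have "\<tau> (Suc (a - 1)) (Suc (b - 1)) (Suc (c - 1)) \<in> span G"
      using less.IH[OF _ shifted, of "a - 1" "b - 1" "c - 1"] abc by simp
    then show "\<tau> a b c \<in> span G" using abc by simp
  qed
qed

section \<open>The free associative and the free Lie algebra\<close>

interpretation VA: vector_space ascale
  by unfold_locales (auto simp: ascale_def fun_eq_iff algebra_simps)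

interpretation VT: vector_space tscale
  by unfold_locales (auto simp: tscale_def fun_eq_iff algebra_simps)

lemma amul_Nil [simp]: "amul p q [] = p [] * q []"
  by (simp add: amul_def)

lemma amul_Cons: "amul p q (a # w) = p [] * q (a # w) + amul (\<lambda>u. p (a # u)) q w"
  unfolding amul_def by (simp add: sum.atMost_Suc_shift del: sum.atMost_Suc)

lemma amul_add_left: "amul (p + p') q = amul p q + amul p' q"
  by (simp add: amul_def fun_eq_iff sum.distrib algebra_simps)

lemma amul_add_right: "amul p (q + q') = amul p q + amul p q'"
  by (simp add: amul_def fun_eq_iff sum.distrib algebra_simps)

lemma amul_diff_left: "amul (p - p') q = amul p q - amul p' q"
  by (simp add: amul_def fun_eq_iff sum_subtractf algebra_simps)

lemma amul_diff_right: "amul p (q - q') = amul p q - amul p q'"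
  by (simp add: amul_def fun_eq_iff sum_subtractf algebra_simps)

lemma amul_scale_left: "amul (ascale c p) q = ascale c (amul p q)"
  by (simp add: amul_def ascale_def fun_eq_iff sum_distrib_left algebra_simps)

lemma amul_scale_right: "amul p (ascale c q) = ascale c (amul p q)"
  by (simp add: amul_def ascale_def fun_eq_iff sum_distrib_left algebra_simps)

lemma amul_assoc: "amul (amul p q) r = amul p (amul q r)"
proof
  fix w show "amul (amul p q) r w = amul p (amul q r) w"
  proof (induction w arbitrary: p q r)
    case Nil then show ?case by simp
  next
    case (Cons a w)
    have "(\<lambda>u. amul p q (a # u)) = ascale (p []) (\<lambda>u. q (a # u)) + amul (\<lambda>u. p (a # u)) q"
      by (simp add: fun_eq_iff amul_Cons ascale_def)
    then have "amul (\<lambda>u. amul p q (a # u)) r =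
        ascale (p []) (amul (\<lambda>u. q (a # u)) r) + amul (amul (\<lambda>u. p (a # u)) q) r"
      by (simp only: amul_add_left amul_scale_left)
    then show ?case by (simp add: amul_Cons Cons.IH ascale_def algebra_simps)
  qed
qed

lemma lbr_antisym: "lbr a b = - lbr b a"
  by (simp add: lbr_def)

lemma lbr_self [simp]: "lbr a a = 0"
  by (simp add: lbr_def)

lemma lbr_jacobi: "lbr a (lbr b c) = lbr (lbr a b) c + lbr b (lbr a c)"
  by (simp add: lbr_def amul_diff_left amul_diff_right amul_assoc algebra_simps)

lemma lbr_add_left: "lbr (a + a') b = lbr a b + lbr a' b"
  by (simp add: lbr_def amul_add_left amul_add_right algebra_simps)

lemma lbr_add_right: "lbr a (b + b') = lbr a b + lbr a b'"
  by (simp add: lbr_def amul_add_left amul_add_right algebra_simps)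

lemma lbr_scale_left: "lbr (ascale c a) b = ascale c (lbr a b)"
  unfolding lbr_def amul_scale_left amul_scale_right by (simp add: ascale_def fun_eq_iff algebra_simps)

lemma lbr_scale_right: "lbr a (ascale c b) = ascale c (lbr a b)"
  unfolding lbr_def amul_scale_left amul_scale_right by (simp add: ascale_def fun_eq_iff algebra_simps)

lemma tens_add_left: "tens (a + a') b = tens a b + tens a' b"
  by (simp add: tens_def fun_eq_iff algebra_simps)

lemma tens_add_right: "tens a (b + b') = tens a b + tens a b'"
  by (simp add: tens_def fun_eq_iff algebra_simps)

lemma tens_scale_left: "tens (ascale c a) b = tscale c (tens a b)"
  by (simp add: tens_def ascale_def tscale_def fun_eq_iff)

lemma tens_scale_right: "tens a (ascale c b) = tscale c (tens a b)"
  by (simp add: tens_def ascale_def tscale_def fun_eq_iff)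

lemma tens_minus_left: "tens (- a) b = - tens a b"
  by (simp add: tens_def fun_eq_iff)

lemma lbr_in_span:
  "a \<in> VA.span A \<Longrightarrow> b \<in> VA.span B \<Longrightarrow> (\<And>u v. u \<in> A \<Longrightarrow> v \<in> B \<Longrightarrow> lbr u v \<in> VA.span C)
    \<Longrightarrow> lbr a b \<in> VA.span C"
  by (rule bilinear_in_span[where f = lbr, OF VA.vector_space_axioms VA.vector_space_axioms
        VA.vector_space_axioms lbr_add_left lbr_scale_left lbr_add_right lbr_scale_right])

lemma tens_in_span:
  "a \<in> VA.span A \<Longrightarrow> b \<in> VA.span B \<Longrightarrow> (\<And>u v. u \<in> A \<Longrightarrow> v \<in> B \<Longrightarrow> tens u v \<in> VT.span C)
    \<Longrightarrow> tens a b \<in> VT.span C"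
  by (rule bilinear_in_span[where f = tens, OF VA.vector_space_axioms VA.vector_space_axioms
        VT.vector_space_axioms tens_add_left tens_scale_left tens_add_right tens_scale_right])

definition bihom :: "ncpoly \<Rightarrow> nat \<Rightarrow> nat \<Rightarrow> bool" where
  "bihom p a b \<longleftrightarrow> (\<forall>w. p w \<noteq> 0 \<longrightarrow> nx w = a \<and> ny w = b)"

definition tens_bihom :: "tens2 \<Rightarrow> nat \<Rightarrow> nat \<Rightarrow> bool" where
  "tens_bihom t a b \<longleftrightarrow> (\<forall>u v. t (u, v) \<noteq> 0 \<longrightarrow> nx u + nx v = a \<and> ny u + ny v = b)"

lemma LtensL_bideg_iff: "t \<in> LtensL_bideg p q \<longleftrightarrow> t \<in> LtensL \<and> tens_bihom t p q"
  by (simp add: LtensL_bideg_def tens_bihom_def)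

lemma nx_append [simp]: "nx (u @ v) = nx u + nx v"
  by (simp add: nx_def)

lemma ny_append [simp]: "ny (u @ v) = ny u + ny v"
  by (simp add: ny_def)

lemma length_eq_nx_add_ny: "length w = nx w + ny w"
  unfolding nx_def ny_def by (induction w) auto

lemma bihom_amul:
  assumes "bihom p a b" "bihom q c d"
  shows "bihom (amul p q) (a + c) (b + d)"
  unfolding bihom_def
proof (intro allI impI)
  fix w assume "amul p q w \<noteq> 0"
  then obtain i where "p (take i w) \<noteq> 0" "q (drop i w) \<noteq> 0"
    unfolding amul_def by (metis (no_types, lifting) mult_eq_0_iff sum.neutral)
  then have "nx (take i w) = a" "ny (take i w) = b" "nx (drop i w) = c" "ny (drop i w) = d"
    using assms unfolding bihom_def by auto
  then show "nx w = a + c \<and> ny w = b + d"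
    by (metis append_take_drop_id nx_append ny_append)
qed

lemma bihom_diff: "bihom p a b \<Longrightarrow> bihom q a b \<Longrightarrow> bihom (p - q) a b"
  unfolding bihom_def by (metis diff_self minus_apply)

lemma bihom_lbr: "bihom p a b \<Longrightarrow> bihom q c d \<Longrightarrow> bihom (lbr p q) (a + c) (b + d)"
  unfolding lbr_def by (metis bihom_amul bihom_diff add.commute)

lemma bihom_letX: "bihom letX 1 0"
  by (simp add: bihom_def letX_def nx_def ny_def)

lemma bihom_letY: "bihom letY 0 1"
  by (simp add: bihom_def letY_def nx_def ny_def)

lemma tens_bihom_tens: "bihom a p q \<Longrightarrow> bihom b p' q' \<Longrightarrow> tens_bihom (tens a b) (p + p') (q + q')"
  by (auto simp: bihom_def tens_bihom_def tens_def)

primrec ad_y_x :: "nat \<Rightarrow> ncpoly" where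
  "ad_y_x 0 = letX"
| "ad_y_x (Suc i) = lbr letY (ad_y_x i)"

primrec rbracket :: "nat list \<Rightarrow> nat \<Rightarrow> ncpoly" where
  "rbracket [] k = ad_y_x k"
| "rbracket (i # ns) k = lbr (ad_y_x i) (rbracket ns k)"

definition rbrackets :: "nat \<Rightarrow> nat \<Rightarrow> ncpoly set" where
  "rbrackets p q = {rbracket ns k | ns k. Suc (length ns) = p \<and> sum_list ns + k = q}"

fun lie_gens :: "nat \<Rightarrow> nat \<Rightarrow> ncpoly set" where
  "lie_gens 0 q = (if q = 1 then {letY} else {})"
| "lie_gens (Suc p) q = rbrackets (Suc p) q"

lemma ad_y_x_freeLie: "ad_y_x i \<in> freeLie"
  by (induction i) (auto intro: freeLie.intros)

lemma bihom_ad_y_x: "bihom (ad_y_x i) 1 i"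
proof (induction i)
  case (Suc i)
  then show ?case using bihom_lbr[OF bihom_letY Suc] by simp
qed (use bihom_letX in simp)

lemma rbracket_freeLie: "rbracket ns k \<in> freeLie"
  by (induction ns) (auto intro: freeLie.bracket ad_y_x_freeLie)

lemma bihom_rbracket: "bihom (rbracket ns k) (Suc (length ns)) (sum_list ns + k)"
proof (induction ns)
  case (Cons i ns)
  then show ?case using bihom_lbr[OF bihom_ad_y_x Cons.IH, of i] by (simp add: add.assoc)
qed (use bihom_ad_y_x in simp)

lemma lie_gens_freeLie_bihom:
  assumes "u \<in> lie_gens p q"
  shows "u \<in> freeLie \<and> bihom u p q"
proof (cases p)
  case 0
  then show ?thesis using assms bihom_letY freeLie.gen_y by (simp split: if_splits)
next
  case (Suc n)
  then obtain ns k where "u = rbracket ns k" "p = Suc (length ns)" "q = sum_list ns + k"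
    using assms by (auto simp: rbrackets_def)
  then show ?thesis using rbracket_freeLie bihom_rbracket by simp
qed

lemma lbr_ad_y_x_in_span:
  assumes "v \<in> VA.span (rbrackets p q)"
  shows "lbr (ad_y_x i) v \<in> VA.span (rbrackets (Suc p) (i + q))"
proof (rule lbr_in_span[OF VA.span_base assms])
  show "ad_y_x i \<in> {ad_y_x i}" by simp
  fix u v assume "u \<in> {ad_y_x i}" "v \<in> rbrackets p q"
  then obtain ns k where "u = ad_y_x i" "v = rbracket ns k" "Suc (length ns) = p" "sum_list ns + k = q"
    unfolding rbrackets_def by blast
  then have "lbr u v \<in> rbrackets (Suc p) (i + q)"
    unfolding rbrackets_def by (intro CollectI exI[of _ "i # ns"] exI[of _ k]) auto
  then show "lbr u v \<in> VA.span (rbrackets (Suc p) (i + q))" by (rule VA.span_base)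
qed

lemma lbr_letY_rbracket:
  "p = Suc (length ns) \<Longrightarrow> q = Suc (sum_list ns + k) \<Longrightarrow>
    lbr letY (rbracket ns k) \<in> VA.span (rbrackets p q)"
proof (induction ns arbitrary: p q)
  case Nil
  then have "lbr letY (rbracket [] k) \<in> rbrackets p q"
    unfolding rbrackets_def by (intro CollectI exI[of _ "[]"] exI[of _ "Suc k"]) simp
  then show ?case by (rule VA.span_base)
next
  case (Cons i ns)
  have eq: "lbr letY (rbracket (i # ns) k) = rbracket (Suc i # ns) k + lbr (ad_y_x i) (lbr letY (rbracket ns k))"
    using lbr_jacobi[of letY "ad_y_x i" "rbracket ns k"] by simp
  have "rbracket (Suc i # ns) k \<in> VA.span (rbrackets p q)"
    using Cons.prems unfolding rbrackets_def by (intro VA.span_base CollectI exI[of _ "Suc i # ns"] exI[of _ k]) auto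
  moreover have "lbr (ad_y_x i) (lbr letY (rbracket ns k)) \<in> VA.span (rbrackets p q)"
    using lbr_ad_y_x_in_span[OF Cons.IH[OF refl refl], of i] Cons.prems by (simp add: add.assoc)
  ultimately show ?case unfolding eq by (rule VA.span_add)
qed

lemma lbr_rbracket_in_span:
  "p = Suc (length ns) + Suc (length ns') \<Longrightarrow> q = sum_list ns + k + (sum_list ns' + k') \<Longrightarrow>
    lbr (rbracket ns k) (rbracket ns' k') \<in> VA.span (rbrackets p q)"
proof (induction ns arbitrary: ns' k' p q)
  case Nil
  then have "lbr (rbracket [] k) (rbracket ns' k') \<in> rbrackets p q"
    unfolding rbrackets_def by (intro CollectI exI[of _ "k # ns'"] exI[of _ k']) simp
  then show ?case by (rule VA.span_base)
next
  case (Cons i ns)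
  let ?X = "rbracket ns k" and ?Y = "rbracket ns' k'"
  have eq: "lbr (rbracket (i # ns) k) ?Y = lbr (ad_y_x i) (lbr ?X ?Y) - lbr ?X (rbracket (i # ns') k')"
    using lbr_jacobi[of "ad_y_x i" ?X ?Y] by simp
  have "lbr (ad_y_x i) (lbr ?X ?Y) \<in> VA.span (rbrackets p q)"
    using lbr_ad_y_x_in_span[OF Cons.IH[OF refl refl, of ns' k'], of i] Cons.prems by (simp add: ac_simps)
  moreover have "lbr ?X (rbracket (i # ns') k') \<in> VA.span (rbrackets p q)"
    using Cons.prems by (intro Cons.IH) simp_all
  ultimately show ?case unfolding eq by (rule VA.span_diff)
qed

lemma lbr_lie_gens_in_span:
  assumes u: "u \<in> lie_gens p q" and v: "v \<in> lie_gens p' q'"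
  shows "lbr u v \<in> VA.span (lie_gens (p + p') (q + q'))"
proof (cases p)
  case 0
  then have u: "u = letY" "q = 1" using u by (simp_all split: if_splits)
  show ?thesis
  proof (cases p')
    case 0
    then show ?thesis using u v by (simp add: VA.span_zero split: if_splits)
  next
    case (Suc n)
    then obtain ns k where v: "v = rbracket ns k" "p' = Suc (length ns)" "q' = sum_list ns + k"
      using v by (auto simp: rbrackets_def)
    have "lbr letY (rbracket ns k) \<in> VA.span (rbrackets p' (q + q'))"
      using u v by (intro lbr_letY_rbracket) simp_all
    then show ?thesis using u v \<open>p = 0\<close> by simp
  qed
next
  case (Suc n)
  then obtain ns k where u': "u = rbracket ns k" "p = Suc (length ns)" "q = sum_list ns + k"
    using u by (auto simp: rbrackets_def)
  show ?thesis
  proof (cases p')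
    case 0
    then have "v = letY" "q' = 1" using v by (simp_all split: if_splits)
    have "lbr letY (rbracket ns k) \<in> VA.span (rbrackets p (q + q'))"
      using u' \<open>q' = 1\<close> by (intro lbr_letY_rbracket) simp_all
    then have "lbr u v \<in> VA.span (rbrackets p (q + q'))"
      using u' \<open>v = letY\<close> lbr_antisym[of u v] by (simp add: VA.span_neg)
    then show ?thesis using Suc \<open>p' = 0\<close> by simp
  next
    case (Suc n')
    then obtain ns' k' where v: "v = rbracket ns' k'" "p' = Suc (length ns')" "q' = sum_list ns' + k'"
      using v by (auto simp: rbrackets_def)
    have "lbr u v \<in> VA.span (rbrackets (p + p') (q + q'))"
      unfolding u'(1) v(1) by (rule lbr_rbracket_in_span) (simp_all add: u' v)
    then show ?thesis using Suc by simp
  qed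
qed

lemma freeLie_in_span_lie_gens: "a \<in> freeLie \<Longrightarrow> a \<in> VA.span (\<Union>p q. lie_gens p q)"
proof (induction rule: freeLie.induct)
  case gen_x
  have "letX \<in> lie_gens 1 0"
    unfolding One_nat_def lie_gens.simps rbrackets_def by (intro CollectI exI[of _ "[]"] exI[of _ 0]) simp
  then show ?case by (blast intro: VA.span_base)
next
  case gen_y
  have "letY \<in> lie_gens 0 1" by simp
  then show ?case by (blast intro: VA.span_base)
next
  case zero
  show ?case by (rule VA.span_zero)
next
  case (add a b)
  show ?case by (rule VA.span_add[OF add.IH])
next
  case (scale a c)
  show ?case by (rule VA.span_scale[OF scale.IH])
next
  case (bracket a b)
  show ?case
  proof (rule lbr_in_span[OF bracket.IH])
    fix u v assume "u \<in> (\<Union>p q. lie_gens p q)" "v \<in> (\<Union>p q. lie_gens p q)"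
    then obtain p q p' q' where "u \<in> lie_gens p q" "v \<in> lie_gens p' q'" by blast
    then have "lbr u v \<in> VA.span (lie_gens (p + p') (q + q'))" by (rule lbr_lie_gens_in_span)
    also have "\<dots> \<subseteq> VA.span (\<Union>p q. lie_gens p q)" by (intro VA.span_mono) blast
    finally show "lbr u v \<in> VA.span (\<Union>p q. lie_gens p q)" .
  qed
qed

section \<open>Reduction of F(L) in bidegree (3, m)\<close>

definition bideg_part :: "nat \<Rightarrow> nat \<Rightarrow> tens2 \<Rightarrow> tens2" where
  "bideg_part p q t = (\<lambda>(u, v). if nx u + nx v = p \<and> ny u + ny v = q then t (u, v) else 0)"

lemma module_hom_bideg_part: "module_hom tscale tscale (bideg_part p q)"
  by (intro module_hom.intro VT.module_axioms module_hom_axioms.intro)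
     (auto simp: bideg_part_def tscale_def fun_eq_iff)

lemma bideg_part_bihom: "tens_bihom t p' q' \<Longrightarrow> bideg_part p q t = (if (p', q') = (p, q) then t else 0)"
  by (auto simp: bideg_part_def tens_bihom_def fun_eq_iff)

lemma in_span_bideg_component:
  assumes gens: "\<And>p q g. g \<in> G p q \<Longrightarrow> tens_bihom g p q"
    and t: "t \<in> VT.span (\<Union>p q. G p q)" "tens_bihom t p q"
  shows "t \<in> VT.span (G p q)"
proof -
  interpret part: module_hom tscale tscale "bideg_part p q" by (rule module_hom_bideg_part)
  have "t = bideg_part p q t" using t(2) by (simp add: bideg_part_bihom)
  also have "\<dots> \<in> bideg_part p q ` VT.span (\<Union>p q. G p q)" using t(1) by blast
  also have "\<dots> = VT.span (bideg_part p q ` (\<Union>p q. G p q))" by (rule part.span_image[symmetric])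
  also have "\<dots> \<subseteq> VT.span (insert 0 (G p q))"
    by (intro VT.span_mono) (auto simp: bideg_part_bihom[OF gens])
  finally show ?thesis by (simp add: VT.span_insert_0)
qed

definition tens_gens :: "nat \<Rightarrow> nat \<Rightarrow> tens2 set" where
  "tens_gens p q = {tens u v | u v p1 q1 p2 q2.
     u \<in> lie_gens p1 q1 \<and> v \<in> lie_gens p2 q2 \<and> p1 + p2 = p \<and> q1 + q2 = q}"

lemma tens_in_tens_gens:
  "u \<in> lie_gens p1 q1 \<Longrightarrow> v \<in> lie_gens p2 q2 \<Longrightarrow> tens u v \<in> tens_gens (p1 + p2) (q1 + q2)"
  unfolding tens_gens_def by blast

lemma tens_bihom_tens_gens:
  assumes "g \<in> tens_gens p q"
  shows "tens_bihom g p q"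
proof -
  obtain u v p1 q1 p2 q2 where uv: "g = tens u v" "u \<in> lie_gens p1 q1" "v \<in> lie_gens p2 q2"
      "p = p1 + p2" "q = q1 + q2"
    using assms unfolding tens_gens_def by blast
  show ?thesis
    unfolding uv by (rule tens_bihom_tens) (use lie_gens_freeLie_bihom uv(2,3) in blast)+
qed

lemma LtensL_in_span_tens_gens: "LtensL \<subseteq> VT.span (\<Union>p q. tens_gens p q)"
  unfolding LtensL_def
proof (rule VT.span_minimal[OF _ VT.subspace_span], clarify)
  fix a b assume "a \<in> freeLie" "b \<in> freeLie"
  then show "tens a b \<in> VT.span (\<Union>p q. tens_gens p q)"
  proof (rule tens_in_span[OF freeLie_in_span_lie_gens freeLie_in_span_lie_gens])
    fix u v assume "u \<in> (\<Union>p q. lie_gens p q)" "v \<in> (\<Union>p q. lie_gens p q)"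
    then obtain p1 q1 p2 q2 where "u \<in> lie_gens p1 q1" "v \<in> lie_gens p2 q2" by blast
    then have "tens u v \<in> tens_gens (p1 + p2) (q1 + q2)" by (rule tens_in_tens_gens)
    then show "tens u v \<in> VT.span (\<Union>p q. tens_gens p q)" by (blast intro: VT.span_base)
  qed
qed

lemma LtensL_bideg_in_span_tens_gens: "LtensL_bideg p q \<subseteq> VT.span (tens_gens p q)"
proof
  fix t assume "t \<in> LtensL_bideg p q"
  then have "t \<in> VT.span (\<Union>p q. tens_gens p q)" "tens_bihom t p q"
    using LtensL_in_span_tens_gens by (auto simp: LtensL_bideg_iff)
  then show "t \<in> VT.span (tens_gens p q)"
    using in_span_bideg_component[of tens_gens, OF tens_bihom_tens_gens] by blast
qed

definition RelF_bideg :: "nat \<Rightarrow> nat \<Rightarrow> tens2 set" where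
  "RelF_bideg p q = LtensL_bideg p q \<inter> RelF"

lemma subspace_tens_bihom: "VT.subspace {t. tens_bihom t p q}"
proof (rule VT.subspaceI)
  show "0 \<in> {t. tens_bihom t p q}" by (simp add: tens_bihom_def)
next
  fix s t assume st: "s \<in> {t. tens_bihom t p q}" "t \<in> {t. tens_bihom t p q}"
  have "s (u, v) \<noteq> 0 \<or> t (u, v) \<noteq> 0" if "(s + t) (u, v) \<noteq> 0" for u v
    using that by auto
  then show "s + t \<in> {t. tens_bihom t p q}" using st unfolding tens_bihom_def by blast
next
  fix c t assume "t \<in> {t. tens_bihom t p q}"
  then show "tscale c t \<in> {t. tens_bihom t p q}" by (simp add: tens_bihom_def tscale_def)
qed

lemma subspace_LtensL_bideg: "VT.subspace (LtensL_bideg p q)"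
proof -
  note subspace_tens_bihom
  moreover have "LtensL_bideg p q = LtensL \<inter> {t. tens_bihom t p q}"
    by (auto simp: LtensL_bideg_iff)
  ultimately show ?thesis
    unfolding LtensL_def by (simp add: VT.subspace_inter VT.subspace_span)
qed

lemma tens_in_LtensL_bideg:
  assumes "a \<in> freeLie" "b \<in> freeLie" "bihom a p q" "bihom b p' q'" "P = p + p'" "Q = q + q'"
  shows "tens a b \<in> LtensL_bideg P Q"
proof -
  have "tens_bihom (tens a b) P Q" using tens_bihom_tens[OF assms(3,4)] assms(5,6) by simp
  moreover have "tens a b \<in> LtensL" unfolding LtensL_def using assms(1,2) by (blast intro: VT.span_base)
  ultimately show ?thesis by (simp add: LtensL_bideg_iff)
qed

lemma symmetry_in_RelF_bideg:
  assumes "a \<in> freeLie" "b \<in> freeLie" "bihom a p q" "bihom b p' q'" "P = p + p'" "Q = q + q'"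
  shows "tens a b - tens b a \<in> RelF_bideg P Q"
proof -
  have "tens a b \<in> LtensL_bideg P Q" "tens b a \<in> LtensL_bideg P Q"
    using assms by (auto intro!: tens_in_LtensL_bideg)
  then have "tens a b - tens b a \<in> LtensL_bideg P Q"
    by (rule VT.subspace_diff[OF subspace_LtensL_bideg])
  moreover have "tens a b - tens b a \<in> RelF"
    unfolding RelF_def using assms(1,2) by (intro VT.span_base) blast
  ultimately show ?thesis by (simp add: RelF_bideg_def)
qed

lemma invariance_in_RelF_bideg:
  assumes "a \<in> freeLie" "b \<in> freeLie" "c \<in> freeLie" "bihom a p1 q1" "bihom b p2 q2" "bihom c p3 q3"
    "P = p1 + p2 + p3" "Q = q1 + q2 + q3"
  shows "tens a (lbr b c) - tens (lbr a b) c \<in> RelF_bideg P Q"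
proof -
  have "tens a (lbr b c) \<in> LtensL_bideg P Q"
    by (rule tens_in_LtensL_bideg[OF assms(1) freeLie.bracket[OF assms(2,3)] assms(4) bihom_lbr[OF assms(5,6)]])
       (simp_all add: assms(7,8) add.assoc)
  moreover have "tens (lbr a b) c \<in> LtensL_bideg P Q"
    by (rule tens_in_LtensL_bideg[OF freeLie.bracket[OF assms(1,2)] assms(3) bihom_lbr[OF assms(4,5)] assms(6)])
       (simp_all add: assms(7,8))
  ultimately have "tens a (lbr b c) - tens (lbr a b) c \<in> LtensL_bideg P Q"
    by (rule VT.subspace_diff[OF subspace_LtensL_bideg])
  moreover have "tens a (lbr b c) - tens (lbr a b) c \<in> RelF"
    unfolding RelF_def using assms(1-3) by (intro VT.span_base) blast
  ultimately show ?thesis by (simp add: RelF_bideg_def)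
qed

definition tau :: "nat \<Rightarrow> nat \<Rightarrow> nat \<Rightarrow> tens2" where
  "tau i j k = tens (ad_y_x i) (lbr (ad_y_x j) (ad_y_x k))"

lemma lie_gens_1: "lie_gens 1 q = {ad_y_x q}"
  by (auto simp: rbrackets_def)

lemma lie_gens_2: "u \<in> lie_gens 2 q \<longleftrightarrow> (\<exists>j k. u = lbr (ad_y_x j) (ad_y_x k) \<and> j + k = q)"
proof
  assume "u \<in> lie_gens 2 q"
  then obtain ns k where ns: "u = rbracket ns k" "length ns = 1" "sum_list ns + k = q"
    by (auto simp: numeral_2_eq_2 rbrackets_def)
  then obtain j where "ns = [j]" by (auto simp: length_Suc_conv)
  then have "u = lbr (ad_y_x j) (ad_y_x k)" "j + k = q" using ns by simp_all
  then show "\<exists>j k. u = lbr (ad_y_x j) (ad_y_x k) \<and> j + k = q" by blast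
next
  assume "\<exists>j k. u = lbr (ad_y_x j) (ad_y_x k) \<and> j + k = q"
  then obtain j k where "u = rbracket [j] k" "j + k = q" by auto
  then show "u \<in> lie_gens 2 q"
    unfolding numeral_2_eq_2 lie_gens.simps rbrackets_def by (intro CollectI exI[of _ "[j]"] exI[of _ k]) simp
qed

lemma lie_gens_3:
  "u \<in> lie_gens 3 q \<longleftrightarrow> (\<exists>i j k. u = lbr (ad_y_x i) (lbr (ad_y_x j) (ad_y_x k)) \<and> i + j + k = q)"
proof
  assume "u \<in> lie_gens 3 q"
  then obtain ns k where ns: "u = rbracket ns k" "length ns = 2" "sum_list ns + k = q"
    by (auto simp: numeral_3_eq_3 rbrackets_def)
  then obtain i j where "ns = [i, j]" by (auto simp: numeral_2_eq_2 length_Suc_conv)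
  then have "u = lbr (ad_y_x i) (lbr (ad_y_x j) (ad_y_x k))" "i + j + k = q" using ns by simp_all
  then show "\<exists>i j k. u = lbr (ad_y_x i) (lbr (ad_y_x j) (ad_y_x k)) \<and> i + j + k = q" by blast
next
  assume "\<exists>i j k. u = lbr (ad_y_x i) (lbr (ad_y_x j) (ad_y_x k)) \<and> i + j + k = q"
  then obtain i j k where "u = rbracket [i, j] k" "i + j + k = q" by auto
  then show "u \<in> lie_gens 3 q"
    unfolding numeral_3_eq_3 lie_gens.simps rbrackets_def
    by (intro CollectI exI[of _ "[i, j]"] exI[of _ k]) (simp add: add.assoc)
qed

lemma lbr_ad_y_x_freeLie: "lbr (ad_y_x j) (ad_y_x k) \<in> freeLie"
  by (intro freeLie.bracket ad_y_x_freeLie)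

lemma bihom_lbr_ad_y_x: "bihom (lbr (ad_y_x j) (ad_y_x k)) 2 (j + k)"
  using bihom_lbr[OF bihom_ad_y_x bihom_ad_y_x, of j k] unfolding one_add_one .

lemma tens_lie_gens_in_span_tau:
  assumes uv: "u \<in> lie_gens p q" "v \<in> lie_gens p' q'" "p + p' = 3" "q + q' = m" "p \<le> 1"
  shows "tens u v \<in> VT.span ({tau i j k | i j k. i + j + k = m} \<union> RelF_bideg 3 m)"
    (is "_ \<in> VT.span ?T")
proof -
  consider "p = 0" | "p = 1" using \<open>p \<le> 1\<close> by linarith
  then show ?thesis
  proof cases
    case 1
    have "u = letY" "q = 1" using uv(1) 1 by (simp_all split: if_splits)
    moreover obtain i j k where "v = lbr (ad_y_x i) (lbr (ad_y_x j) (ad_y_x k))" "q' = i + j + k"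
      using uv(2,3) 1 lie_gens_3 by auto
    ultimately have uv': "u = letY" "q = 1" "v = lbr (ad_y_x i) (lbr (ad_y_x j) (ad_y_x k))"
        "q' = i + j + k"
      by simp_all
    let ?c = "lbr (ad_y_x j) (ad_y_x k)"
    have eq: "tens u v = (tens letY (lbr (ad_y_x i) ?c) - tens (lbr letY (ad_y_x i)) ?c) + tau (Suc i) j k"
      unfolding uv' tau_def by simp
    have rel: "tens letY (lbr (ad_y_x i) ?c) - tens (lbr letY (ad_y_x i)) ?c \<in> RelF_bideg 3 m"
      by (rule invariance_in_RelF_bideg[OF freeLie.gen_y ad_y_x_freeLie lbr_ad_y_x_freeLie
            bihom_letY bihom_ad_y_x bihom_lbr_ad_y_x]) (use uv uv' in simp_all)
    have "tau (Suc i) j k \<in> {tau i j k | i j k. i + j + k = m}"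
      using uv uv' by (intro CollectI exI[of _ "Suc i"] exI[of _ j] exI[of _ k]) simp
    then show ?thesis
      unfolding eq by (rule VT.span_add[OF VT.span_base[OF UnI2[OF rel]] VT.span_base[OF UnI1]])
  next
    case 2
    have "u = ad_y_x q" using uv(1) 2 lie_gens_1 by simp
    moreover obtain j k where "v = lbr (ad_y_x j) (ad_y_x k)" "q' = j + k"
      using uv(2,3) 2 lie_gens_2 by auto
    ultimately have "tens u v = tau q j k" "q + j + k = m" using uv(4) by (simp_all add: tau_def)
    then have "tens u v \<in> ?T" by blast
    then show ?thesis by (rule VT.span_base)
  qed
qed

lemma tens_gens_3_in_span_tau:
  "tens_gens 3 m \<subseteq> VT.span ({tau i j k | i j k. i + j + k = m} \<union> RelF_bideg 3 m)"
    (is "_ \<subseteq> VT.span ?T")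
proof
  fix g assume "g \<in> tens_gens 3 m"
  then obtain u v p q p' q' where uv: "g = tens u v" "u \<in> lie_gens p q" "v \<in> lie_gens p' q'"
      "p + p' = 3" "q + q' = m"
    unfolding tens_gens_def by blast
  show "g \<in> VT.span ?T"
  proof (cases "p \<le> 1")
    case True
    then show ?thesis unfolding uv(1) by (rule tens_lie_gens_in_span_tau[OF uv(2-5)])
  next
    case False
    have "tens u v - tens v u \<in> RelF_bideg 3 m"
      using lie_gens_freeLie_bihom[OF uv(2)] lie_gens_freeLie_bihom[OF uv(3)] uv(4,5)
      by (intro symmetry_in_RelF_bideg) auto
    moreover have "tens v u \<in> VT.span ?T"
      by (rule tens_lie_gens_in_span_tau[OF uv(3,2)]) (use uv False in auto)
    ultimately have "(tens u v - tens v u) + tens v u \<in> VT.span ?T"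
      by (intro VT.span_add[OF VT.span_base[OF UnI2]])
    then show ?thesis using uv(1) by simp
  qed
qed

definition gen_index :: "nat \<Rightarrow> nat set" where
  "gen_index m = {i. 3 * i + 3 \<le> m \<and> odd (m - i)}"

definition gen_tau :: "nat \<Rightarrow> nat \<Rightarrow> tens2" where
  "gen_tau m i = tau i (Suc i) (m - 2 * i - 1)"

lemma triple_relations_tau: "triple_relations tscale (gen_tau m ` gen_index m \<union> RelF_bideg 3 m) m tau"
proof (intro triple_relations.intro VT.vector_space_axioms triple_relations_axioms.intro)
  let ?G = "gen_tau m ` gen_index m \<union> RelF_bideg 3 m"
  have rel: "x \<in> VT.span ?G" if "x \<in> RelF_bideg 3 m" for x
    using that by (blast intro: VT.span_base)
  fix i j k
  have "tau i j k + tau i k j = 0"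
    using lbr_antisym[of "ad_y_x k" "ad_y_x j"] by (simp add: tau_def tens_def fun_eq_iff)
  then show "tau i j k + tau i k j \<in> VT.span ?G"
    by (simp add: VT.span_zero)
  assume "i + j + k = m"
  then have "(tens (ad_y_x i) (lbr (ad_y_x j) (ad_y_x k)) - tens (lbr (ad_y_x i) (ad_y_x j)) (ad_y_x k))
      + (tens (lbr (ad_y_x i) (ad_y_x j)) (ad_y_x k) - tens (ad_y_x k) (lbr (ad_y_x i) (ad_y_x j)))
      \<in> VT.span ?G"
    by (intro VT.span_add rel
        invariance_in_RelF_bideg[OF ad_y_x_freeLie ad_y_x_freeLie ad_y_x_freeLie
          bihom_ad_y_x bihom_ad_y_x bihom_ad_y_x]
        symmetry_in_RelF_bideg[OF lbr_ad_y_x_freeLie ad_y_x_freeLie bihom_lbr_ad_y_x bihom_ad_y_x])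
       simp_all
  then show "tau i j k - tau k i j \<in> VT.span ?G"
    by (simp add: tau_def)
next
  let ?G = "gen_tau m ` gen_index m \<union> RelF_bideg 3 m"
  fix i j k assume "Suc (i + j + k) = m"
  then have "tens (ad_y_x i) (lbr letY (lbr (ad_y_x j) (ad_y_x k)))
      - tens (lbr (ad_y_x i) letY) (lbr (ad_y_x j) (ad_y_x k)) \<in> RelF_bideg 3 m"
    by (intro invariance_in_RelF_bideg[OF ad_y_x_freeLie freeLie.gen_y lbr_ad_y_x_freeLie
          bihom_ad_y_x bihom_letY bihom_lbr_ad_y_x]) simp_all
  moreover have "tens (ad_y_x i) (lbr letY (lbr (ad_y_x j) (ad_y_x k)))
      - tens (lbr (ad_y_x i) letY) (lbr (ad_y_x j) (ad_y_x k))
      = tau (Suc i) j k + tau i (Suc j) k + tau i j (Suc k)"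
    using lbr_jacobi[of letY "ad_y_x j" "ad_y_x k"] lbr_antisym[of "ad_y_x i" letY]
    by (simp add: tau_def tens_add_right tens_minus_left)
  ultimately show "tau (Suc i) j k + tau i (Suc j) k + tau i j (Suc k) \<in> VT.span ?G"
    by (metis UnI2 VT.span_base)
next
  fix i assume "3 * i + 3 \<le> m" "odd (m - i)"
  then have "gen_tau m i \<in> gen_tau m ` gen_index m" by (simp add: gen_index_def)
  then show "tau i (Suc i) (m - 2 * i - 1) \<in> VT.span (gen_tau m ` gen_index m \<union> RelF_bideg 3 m)"
    unfolding gen_tau_def by (blast intro: VT.span_base)
qed

lemma LtensL_bideg_3_in_span_gen_tau:
  "LtensL_bideg 3 m \<subseteq> VT.span (gen_tau m ` gen_index m \<union> RelF_bideg 3 m)"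
proof -
  let ?T = "{tau i j k | i j k. i + j + k = m} \<union> RelF_bideg 3 m"
  have "VT.span (tens_gens 3 m) \<subseteq> VT.span ?T"
    using tens_gens_3_in_span_tau by (rule VT.span_minimal[OF _ VT.subspace_span])
  also have "VT.span ?T \<subseteq> VT.span (gen_tau m ` gen_index m \<union> RelF_bideg 3 m)"
    using triple_relations_in_span[OF triple_relations_tau]
    by (intro VT.span_minimal[OF _ VT.subspace_span]) (auto intro: VT.span_base)
  finally show ?thesis using LtensL_bideg_in_span_tens_gens by blast
qed

lemma finite_gen_index: "finite (gen_index m)"
  by (rule finite_subset[of _ "{..m}"]) (auto simp: gen_index_def)

section \<open>The trace form of a three-dimensional representation\<close>

(* x acts as the cyclic shift and y diagonally, so ad y multiplies the shift entrywise by the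
   eigenvalue differences s, 1, -1-s (see mat_rep_ad_y_x). *)
definition eig :: "real \<Rightarrow> 3 \<Rightarrow> real" where
  "eig s r = (if r = 1 then s + 1 else if r = 2 then 1 else 0)"

definition xmat :: "real^3^3" where
  "xmat = (\<chi> r c. if c = r + 1 then 1 else 0)"

definition ymat :: "real \<Rightarrow> real^3^3" where
  "ymat s = (\<chi> r c. if c = r then eig s r else 0)"

primrec word_mat :: "real \<Rightarrow> word \<Rightarrow> real^3^3" where
  "word_mat s [] = mat 1"
| "word_mat s (b # w) = (if b then ymat s else xmat) ** word_mat s w"

lemma word_mat_append: "word_mat s (u @ v) = word_mat s u ** word_mat s v"
  by (induction u) (simp_all add: matrix_mul_assoc)

definition words :: "nat \<Rightarrow> word set" where
  "words n = {w. length w = n}"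

definition word_pairs :: "nat \<Rightarrow> (word \<times> word) set" where
  "word_pairs n = {(u, v). length u + length v = n}"

lemma finite_words: "finite (words n)"
  unfolding words_def using finite_lists_length_eq[of "UNIV :: bool set" n] by simp

lemma finite_word_pairs: "finite (word_pairs n)"
proof -
  have "word_pairs n \<subseteq> {w. length w \<le> n} \<times> {w. length w \<le> n}"
    by (auto simp: word_pairs_def)
  moreover have "finite {w :: word. length w \<le> n}"
    using finite_lists_length_le[of "UNIV :: bool set" n] by simp
  ultimately show ?thesis by (blast intro: finite_subset)
qed

lemma sum_words_split:
  "(\<Sum>w\<in>words n. \<Sum>i\<le>length w. g (take i w) (drop i w)) = (\<Sum>(u, v)\<in>word_pairs n. g u v)"
proof -
  have "(\<Sum>w\<in>words n. \<Sum>i\<le>length w. g (take i w) (drop i w)) =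
        (\<Sum>(w, i)\<in>Sigma (words n) (\<lambda>w. {..length w}). g (take i w) (drop i w))"
    by (rule sum.Sigma) (auto simp: finite_words)
  also have "\<dots> = (\<Sum>(u, v)\<in>word_pairs n. g u v)"
    by (rule sum.reindex_bij_witness[where i = "\<lambda>(u, v). (u @ v, length u)"
          and j = "\<lambda>(w, i). (take i w, drop i w)"])
       (auto simp: words_def word_pairs_def min_def)
  finally show ?thesis .
qed

definition trace_rep :: "real \<Rightarrow> nat \<Rightarrow> ncpoly \<Rightarrow> real" where
  "trace_rep s n p = (\<Sum>w\<in>words n. p w * trace (word_mat s w))"

definition trace_form :: "real \<Rightarrow> nat \<Rightarrow> tens2 \<Rightarrow> real" where
  "trace_form s n t = (\<Sum>(u, v)\<in>word_pairs n. t (u, v) * trace (word_mat s (u @ v)))"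

lemma trace_form_tens: "trace_form s n (tens a b) = trace_rep s n (amul a b)"
proof -
  have "trace_rep s n (amul a b) =
      (\<Sum>w\<in>words n. \<Sum>i\<le>length w. a (take i w) * b (drop i w) * trace (word_mat s w))"
    unfolding trace_rep_def amul_def by (simp add: sum_distrib_right)
  also have "\<dots> = (\<Sum>w\<in>words n. \<Sum>i\<le>length w.
      (\<lambda>u v. a u * b v * trace (word_mat s (u @ v))) (take i w) (drop i w))"
    by simp
  also have "\<dots> = (\<Sum>(u, v)\<in>word_pairs n. a u * b v * trace (word_mat s (u @ v)))"
    by (rule sum_words_split)
  also have "\<dots> = trace_form s n (tens a b)"
    unfolding trace_form_def tens_def by (simp add: case_prod_beta)
  finally show ?thesis ..
qed

lemma trace_word_mat_commute: "trace (word_mat s (u @ v)) = trace (word_mat s (v @ u))"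
  unfolding word_mat_append by (rule trace_mul_sym)

lemma trace_form_tens_commute: "trace_form s n (tens a b) = trace_form s n (tens b a)"
  unfolding trace_form_def tens_def
  by (rule sum.reindex_bij_witness[where i = "\<lambda>(u, v). (v, u)" and j = "\<lambda>(u, v). (v, u)"])
     (auto simp: word_pairs_def trace_word_mat_commute[of s _] mult.commute)

lemma trace_rep_amul_commute: "trace_rep s n (amul a b) = trace_rep s n (amul b a)"
  unfolding trace_form_tens[symmetric] by (rule trace_form_tens_commute)

lemma trace_rep_diff: "trace_rep s n (p - q) = trace_rep s n p - trace_rep s n q"
  by (simp add: trace_rep_def sum_subtractf left_diff_distrib)

lemma trace_form_add: "trace_form s n (t + t') = trace_form s n t + trace_form s n t'"
  by (simp add: trace_form_def sum.distrib distrib_right case_prod_beta)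

lemma trace_form_diff: "trace_form s n (t - t') = trace_form s n t - trace_form s n t'"
  by (simp add: trace_form_def sum_subtractf left_diff_distrib case_prod_beta)

lemma trace_form_scale: "trace_form s n (tscale c t) = c * trace_form s n t"
  by (simp add: trace_form_def tscale_def sum_distrib_left case_prod_beta mult.assoc)

lemma trace_form_sum: "trace_form s n (\<Sum>i\<in>I. f i) = (\<Sum>i\<in>I. trace_form s n (f i))"
  unfolding trace_form_def sum_apply sum_distrib_right case_prod_beta by (rule sum.swap)

lemma trace_form_invariant: "trace_form s n (tens a (lbr b c) - tens (lbr a b) c) = 0"
proof -
  have "trace_rep s n (amul a (amul c b)) = trace_rep s n (amul (amul b a) c)"
    by (metis amul_assoc trace_rep_amul_commute)
  then show ?thesis
    unfolding trace_form_diff trace_form_tens lbr_def amul_diff_left amul_diff_right trace_rep_diff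
      amul_assoc
    by simp
qed

lemma trace_form_RelF: "t \<in> RelF \<Longrightarrow> trace_form s n t = 0"
  unfolding RelF_def
proof (induction t rule: VT.span_induct_alt)
  case base
  show ?case by (simp add: trace_form_def)
next
  case (step c x y)
  from step.hyps(1) consider (symm) a b where "x = tens a b - tens b a"
    | (inv) a b c where "x = tens a (lbr b c) - tens (lbr a b) c"
    by blast
  then have "trace_form s n x = 0"
  proof cases
    case symm then show ?thesis by (simp only: trace_form_diff trace_form_tens_commute[of s n a b])
  next
    case inv then show ?thesis by (simp only: trace_form_invariant)
  qed
  then show ?case using step.IH unfolding trace_form_add trace_form_scale by simp
qed

definition mat_rep :: "real \<Rightarrow> nat \<Rightarrow> ncpoly \<Rightarrow> real^3^3" where
  "mat_rep s n p = (\<Sum>w\<in>words n. p w *\<^sub>R word_mat s w)"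

definition length_hom :: "ncpoly \<Rightarrow> nat \<Rightarrow> bool" where
  "length_hom p n \<longleftrightarrow> (\<forall>w. p w \<noteq> 0 \<longrightarrow> length w = n)"

lemma length_hom_if_bihom: "bihom p a b \<Longrightarrow> length_hom p (a + b)"
  unfolding bihom_def length_hom_def using length_eq_nx_add_ny by metis



lemma trace_rep_eq_trace_mat_rep: "trace_rep s n p = trace (mat_rep s n p)"
  unfolding trace_rep_def mat_rep_def trace_sum trace_scaleR ..

lemma amul_length_hom:
  assumes p: "length_hom p n1" and w: "length w = n1 + n2"
  shows "amul p q w = p (take n1 w) * q (drop n1 w)"
proof -
  have n1: "n1 \<in> {..length w}" using w by simp
  have "(\<Sum>i\<in>{..length w} - {n1}. p (take i w) * q (drop i w)) = 0"
  proof (rule sum.neutral, rule ballI)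
    fix i assume "i \<in> {..length w} - {n1}"
    then have "length (take i w) \<noteq> n1" using w by auto
    then have "p (take i w) = 0" using p unfolding length_hom_def by blast
    then show "p (take i w) * q (drop i w) = 0" by simp
  qed
  then show ?thesis unfolding amul_def by (simp add: sum.remove[OF _ n1])
qed

lemma mat_rep_amul:
  assumes "length_hom p n1"
  shows "mat_rep s (n1 + n2) (amul p q) = mat_rep s n1 p ** mat_rep s n2 q"
proof -
  have "mat_rep s (n1 + n2) (amul p q) =
     (\<Sum>w\<in>words (n1 + n2).
        (p (take n1 w) * q (drop n1 w)) *\<^sub>R (word_mat s (take n1 w) ** word_mat s (drop n1 w)))"
    unfolding mat_rep_def
    by (intro sum.cong refl) (simp add: words_def amul_length_hom[OF assms] flip: word_mat_append)
  also have "\<dots> = (\<Sum>(u, v)\<in>words n1 \<times> words n2. (p u * q v) *\<^sub>R (word_mat s u ** word_mat s v))"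
    by (rule sum.reindex_bij_witness[where i = "\<lambda>(u, v). u @ v" and j = "\<lambda>w. (take n1 w, drop n1 w)"])
       (auto simp: words_def)
  also have "\<dots> = (\<Sum>u\<in>words n1. \<Sum>v\<in>words n2. (p u * q v) *\<^sub>R (word_mat s u ** word_mat s v))"
    by (rule sum.cartesian_product[symmetric])
  also have "\<dots> =
      (\<Sum>u\<in>words n1. \<Sum>v\<in>words n2. (p u *\<^sub>R word_mat s u) ** (q v *\<^sub>R word_mat s v))"
    unfolding matrix_mul_scaleR ..
  also have "\<dots> = mat_rep s n1 p ** mat_rep s n2 q"
    unfolding mat_rep_def matrix_mul_sum_left unfolding matrix_mul_sum_right ..
  finally show ?thesis .
qed

lemma mat_rep_diff: "mat_rep s n (p - q) = mat_rep s n p - mat_rep s n q"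
  by (simp add: mat_rep_def scaleR_diff_left sum_subtractf)

lemma mat_rep_lbr:
  assumes "length_hom a n1" "length_hom b n2"
  shows "mat_rep s (n1 + n2) (lbr a b) = mat_rep s n1 a ** mat_rep s n2 b - mat_rep s n2 b ** mat_rep s n1 a"
  using mat_rep_amul[OF assms(1), of s n2 b] mat_rep_amul[OF assms(2), of s n1 a]
  by (simp add: lbr_def mat_rep_diff add.commute)

lemma words_Suc_0: "words (Suc 0) = {[False], [True]}"
  by (auto simp: words_def length_Suc_conv)

lemma mat_rep_letX: "mat_rep s 1 letX = xmat"
  by (simp add: mat_rep_def words_Suc_0 letX_def)

lemma mat_rep_letY: "mat_rep s 1 letY = ymat s"
  by (simp add: mat_rep_def words_Suc_0 letY_def)

definition xpow :: "real \<Rightarrow> nat \<Rightarrow> real^3^3" where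
  "xpow s i = (\<chi> r c. if c = r + 1 then (eig s r - eig s (r + 1)) ^ i else 0)"

lemma mat_rep_ad_y_x: "mat_rep s (Suc i) (ad_y_x i) = xpow s i"
proof (induction i)
  case 0
  show ?case unfolding xpow_def power_0 using mat_rep_letX by (simp add: xmat_def)
next
  case (Suc i)
  have "mat_rep s (1 + Suc i) (lbr letY (ad_y_x i)) = ymat s ** xpow s i - xpow s i ** ymat s"
    using mat_rep_lbr[of letY 1 "ad_y_x i" "Suc i" s] length_hom_if_bihom[OF bihom_letY]
      length_hom_if_bihom[OF bihom_ad_y_x, of i] mat_rep_letY Suc.IH
    by simp
  also have "\<dots> = xpow s (Suc i)"
    by (simp add: vec_eq_iff forall_3 matrix_matrix_mult_def sum_3 ymat_def xpow_def eig_def algebra_simps)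
  finally show ?case by simp
qed

lemma trace_xpow3:
  "trace (xpow s i ** (xpow s j ** xpow s k)) =
    s ^ i * (- s - 1) ^ k + (- s - 1) ^ j * s ^ k + (- s - 1) ^ i * s ^ j"
  by (simp add: trace_def matrix_matrix_mult_def sum_3 xpow_def eig_def)

definition tau_poly :: "nat \<Rightarrow> nat \<Rightarrow> nat \<Rightarrow> real poly" where
  "tau_poly i j k = (let q = [:-1, -1:] in
     monom 1 i * (q ^ k - q ^ j) + monom 1 j * (q ^ i - q ^ k) + monom 1 k * (q ^ j - q ^ i))"

lemma trace_form_tau:
  assumes "i + j + k = m"
  shows "trace_form s (m + 3) (tau i j k) = poly (tau_poly i j k) s"
proof -
  have hom: "length_hom (ad_y_x n) (Suc n)" for n
    using length_hom_if_bihom[OF bihom_ad_y_x, of n] by simp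
  have m3: "m + 3 = Suc i + (Suc j + Suc k)" using assms by simp
  have distrib: "xpow s i ** (xpow s j ** xpow s k - xpow s k ** xpow s j) =
      xpow s i ** (xpow s j ** xpow s k) - xpow s i ** (xpow s k ** xpow s j)"
    by (simp add: matrix_matrix_mult_def vec_eq_iff sum_subtractf right_diff_distrib)
  have "trace_form s (m + 3) (tau i j k) =
      trace (mat_rep s (Suc i + (Suc j + Suc k)) (amul (ad_y_x i) (lbr (ad_y_x j) (ad_y_x k))))"
    unfolding m3 tau_def trace_form_tens trace_rep_eq_trace_mat_rep ..
  also have "\<dots> = trace (xpow s i ** (xpow s j ** xpow s k)) - trace (xpow s i ** (xpow s k ** xpow s j))"
    unfolding mat_rep_amul[OF hom] mat_rep_lbr[OF hom hom] mat_rep_ad_y_x distrib trace_sub ..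
  also have "\<dots> = poly (tau_poly i j k) s"
    \<comment> \<open>the matrix side is normalised to \<open>- s - 1\<close>, the polynomial side to \<open>- 1 - s\<close>\<close>
    unfolding trace_xpow3
    by (simp add: tau_poly_def Let_def poly_monom minus_diff_commute[of 1 s] algebra_simps)
  finally show ?thesis .
qed

lemma coeff_tau_poly:
  assumes "i < j" "i < k" "n \<le> i"
  shows "coeff (tau_poly i j k) n = (if n = i then (- 1) ^ k - (- 1) ^ j else 0)"
  using assms by (auto simp: tau_poly_def Let_def coeff_monom_mult coeff_0_power)

lemma gen_tau_independent_mod_RelF:
  assumes "(\<Sum>i\<in>gen_index m. tscale (c i) (gen_tau m i)) \<in> RelF"
  shows "\<forall>i\<in>gen_index m. c i = 0"
proof -
  define k where "k i = m - 2 * i - 1" for i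
  have k: "i < k i" "i + Suc i + k i = m" "odd (k i + Suc i)" if "i \<in> gen_index m" for i
    using that unfolding k_def gen_index_def by auto
  have "poly (\<Sum>i\<in>gen_index m. smult (c i) (tau_poly i (Suc i) (k i))) s = 0" for s
  proof -
    have "poly (\<Sum>i\<in>gen_index m. smult (c i) (tau_poly i (Suc i) (k i))) s
        = trace_form s (m + 3) (\<Sum>i\<in>gen_index m. tscale (c i) (gen_tau m i))"
      unfolding poly_sum poly_smult trace_form_sum trace_form_scale
    proof (intro sum.cong refl)
      fix i assume i: "i \<in> gen_index m"
      have "gen_tau m i = tau i (Suc i) (k i)" by (simp add: gen_tau_def k_def)
      then show "c i * poly (tau_poly i (Suc i) (k i)) s = c i * trace_form s (m + 3) (gen_tau m i)"
        using trace_form_tau[OF k(2)[OF i]] by simp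
    qed
    also have "\<dots> = 0" using assms by (rule trace_form_RelF)
    finally show ?thesis .
  qed
  then have "(\<Sum>i\<in>gen_index m. smult (c i) (tau_poly i (Suc i) (k i))) = 0"
    using poly_all_0_iff_0 by blast
  then show ?thesis
  proof (rule sum_smult_triangular_eq_0[OF finite_gen_index])
    fix i n assume "i \<in> gen_index m" "n < i"
    then show "coeff (tau_poly i (Suc i) (k i)) n = 0" using k coeff_tau_poly by simp
  next
    fix i assume "i \<in> gen_index m"
    then show "coeff (tau_poly i (Suc i) (k i)) i \<noteq> 0"
      using k[of i] coeff_tau_poly[of i "Suc i" "k i" i] by (auto simp: minus_one_power_iff)
  qed
qed

lemma gen_index_rec:
  assumes "3 \<le> m"
  shows "gen_index m = Suc ` gen_index (m - 3) \<union> (if odd m then {0} else {})"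
proof -
  have "i \<in> gen_index m \<longleftrightarrow> i \<in> Suc ` gen_index (m - 3) \<union> (if odd m then {0} else {})" for i
  proof (cases i)
    case 0 then show ?thesis using assms by (auto simp: gen_index_def)
  next
    case (Suc i')
    have "m - i = (m - 3 - i') + 2 \<or> 3 * i + 3 > m" using Suc by auto
    then show ?thesis using Suc assms by (auto simp: gen_index_def)
  qed
  then show ?thesis by blast
qed

lemma card_gen_index: "int (card (gen_index m)) = (int m - 1) div 2 - (int m - 1) div 3"
proof (induction m rule: less_induct)
  case (less m)
  show ?case
  proof (cases "3 \<le> m")
    case False
    then have "gen_index m = {}" by (auto simp: gen_index_def)
    moreover have "m = 0 \<or> m = 1 \<or> m = 2" using False by auto
    ultimately show ?thesis by auto
  next
    case True
    have "card (gen_index m) = card (Suc ` gen_index (m - 3)) + card (if odd m then {0::nat} else {})"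
      unfolding gen_index_rec[OF True]
      by (rule card_Un_disjoint) (auto simp: finite_gen_index)
    then have "int (card (gen_index m)) = int (card (gen_index (m - 3))) + (if odd m then 1 else 0)"
      by (simp add: card_image)
    moreover have "int (card (gen_index (m - 3))) = (int m - 4) div 2 - (int m - 4) div 3"
      using less.IH[of "m - 3"] True by (simp add: of_nat_diff)
    moreover have "(int m - 1) div 2 = (int m - 4) div 2 + 1 + (if odd m then 1 else 0)"
    proof (cases "even m")
      case True
      then obtain b where "m = 2 * b" by (blast elim: evenE)
      then have "int m - 1 = 2 * (int b - 1) + 1" "int m - 4 = 2 * (int b - 2)" by simp_all
      then show ?thesis using True by simp
    next
      case False
      then obtain b where "m = 2 * b + 1" by (blast elim: oddE)
      then have "int m - 1 = 2 * int b" "int m - 4 = 2 * (int b - 2) + 1" by simp_all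
      then show ?thesis using False by simp
    qed
    moreover have "(int m - 1) div 3 = (int m - 4) div 3 + 1"
      using div_add_self2[of 3 "int m - 4"] by simp
    ultimately show ?thesis by simp
  qed
qed

definition unit_tens :: "word \<times> word \<Rightarrow> tens2" where
  "unit_tens x = (\<lambda>y. if y = x then 1 else 0)"

lemma LtensL_bideg_in_span_unit_tens: "LtensL_bideg p q \<subseteq> VT.span (unit_tens ` word_pairs (p + q))"
proof
  fix t assume t: "t \<in> LtensL_bideg p q"
  have "t x = 0" if "x \<notin> word_pairs (p + q)" for x
    using t that length_eq_nx_add_ny
    by (cases x) (fastforce simp: LtensL_bideg_iff tens_bihom_def word_pairs_def)
  then have "t = (\<Sum>x\<in>word_pairs (p + q). tscale (t x) (unit_tens x))"
    by (auto simp: fun_eq_iff sum_apply tscale_def unit_tens_def finite_word_pairs if_distrib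
        cong: if_cong)
  also have "\<dots> \<in> VT.span (unit_tens ` word_pairs (p + q))"
    by (intro VT.span_sum VT.span_scale VT.span_base) simp
  finally show "t \<in> VT.span (unit_tens ` word_pairs (p + q))" .
qed

lemma tau_in_LtensL_bideg: "i + j + k = m \<Longrightarrow> tau i j k \<in> LtensL_bideg 3 m"
  unfolding tau_def
  by (rule tens_in_LtensL_bideg[OF ad_y_x_freeLie lbr_ad_y_x_freeLie bihom_ad_y_x bihom_lbr_ad_y_x]) simp_all

lemma subspace_RelF: "VT.subspace RelF"
  unfolding RelF_def by (rule VT.subspace_span)

theorem dim_LtensL_bideg_3: "tdim (LtensL_bideg 3 m) = tdim (RelF_bideg 3 m) + card (gen_index m)"
  unfolding RelF_bideg_def
proof (rule VT.dim_eq_dim_inter_add_card[OF LtensL_bideg_in_span_unit_tens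
      finite_imageI[OF finite_word_pairs] subspace_RelF finite_gen_index])
  show "gen_tau m ` gen_index m \<subseteq> LtensL_bideg 3 m"
    by (auto simp: gen_tau_def gen_index_def intro!: tau_in_LtensL_bideg)
  show "LtensL_bideg 3 m \<subseteq> VT.span (gen_tau m ` gen_index m \<union> LtensL_bideg 3 m \<inter> RelF)"
    using LtensL_bideg_3_in_span_gen_tau by (simp add: RelF_bideg_def)
qed (rule gen_tau_independent_mod_RelF)

theorem mainTheorem10:
  fixes m :: nat
  shows "int (dimF 3 m) = (int m - 1) div 2 - (int m - 1) div 3"
  using dim_LtensL_bideg_3[of m] card_gen_index[of m] by (simp add: dimF_def RelF_bideg_def)

end
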